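(* Let $L$ be a BL-comet. Then $L$ is a BL-chain if and only if $\mathrm{pivot}(L)^{\ast\ast}=\mathrm{pivot}(L)$.
   Context: A (commutative) residuated lattice is an algebra $(L,\wedge,\vee,\odot,\rightarrow,0,1)$ such that $(L,\wedge,\vee,0,1)$ is a bounded lattice, $(L,\odot,1)$ is a commutative ordered monoid, and $z\le x\rightarrow y$ iff $x\odot z\le y$ for all $x,y,z\in L$. For $x\in L$ put $x^\ast=x\rightarrow 0$. A BL-algebra is a residuated lattice satisfying $(x\rightarrow y)\vee(y\rightarrow x)=1$ (prelinearity) and $x\odot(x\rightarrow y)=x\wedge y$ (divisibility). A BL-chain is a BL-algebra whose lattice order is total. An element $x$ is idempotent if $x\odot x=x$. For a finite BL-algebra $L$, let $\mathcal{I}(L)$ be its set of idempotent elements; for $x\in\mathcal{I}(L)$ let $\mathcal{C}(x)=\{y\in\mathcal{I}(L): x,y \text{ comparable}\}$; let $\mathcal{D}(L)$ be the set of $x\in\mathcal{I}(L)$ such that $\mathcal{C}(x)=\mathcal{I}(L)$ and $\{y\in\mathcal{I}(L): y\le x\}$ is a chain ($0\in\mathcal{D}(L)$). A finite BL-algebra $L$ is a BL-comet if $\max\mathcal{D}(L)\neq 0$; in that case $\mathrm{pivot}(L)=\max\mathcal{D}(L)$. *)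

theory Defs
  imports Main
begin

record 'a bl_alg =
  carrier :: "'a set"
  meet :: "'a \<Rightarrow> 'a \<Rightarrow> 'a"
  join :: "'a \<Rightarrow> 'a \<Rightarrow> 'a"
  mult :: "'a \<Rightarrow> 'a \<Rightarrow> 'a"
  imp  :: "'a \<Rightarrow> 'a \<Rightarrow> 'a"
  zero :: "'a"
  one  :: "'a"

definition leq :: "('a, 'b) bl_alg_scheme \<Rightarrow> 'a \<Rightarrow> 'a \<Rightarrow> bool" where
  "leq A x y \<longleftrightarrow> meet A x y = x"

definition neg :: "('a, 'b) bl_alg_scheme \<Rightarrow> 'a \<Rightarrow> 'a" where
  "neg A x = imp A x (zero A)"

definition residuated_lattice :: "('a, 'b) bl_alg_scheme \<Rightarrow> bool" where
  "residuated_lattice A \<longleftrightarrow>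
     zero A \<in> carrier A \<and> one A \<in> carrier A \<and>
     (\<forall>x\<in>carrier A. \<forall>y\<in>carrier A.
        meet A x y \<in> carrier A \<and> join A x y \<in> carrier A \<and>
        mult A x y \<in> carrier A \<and> imp A x y \<in> carrier A) \<and>
     \<comment> \<open>bounded lattice\<close>
     (\<forall>x\<in>carrier A. \<forall>y\<in>carrier A. \<forall>z\<in>carrier A.
        meet A x (meet A y z) = meet A (meet A x y) z \<and>
        join A x (join A y z) = join A (join A x y) z) \<and>
     (\<forall>x\<in>carrier A. \<forall>y\<in>carrier A.
        meet A x y = meet A y x \<and> join A x y = join A y x \<and>
        meet A x (join A x y) = x \<and> join A x (meet A x y) = x) \<and>
     (\<forall>x\<in>carrier A. leq A (zero A) x \<and> leq A x (one A)) \<and>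
     \<comment> \<open>commutative ordered monoid\<close>
     (\<forall>x\<in>carrier A. \<forall>y\<in>carrier A. \<forall>z\<in>carrier A.
        mult A x (mult A y z) = mult A (mult A x y) z) \<and>
     (\<forall>x\<in>carrier A. \<forall>y\<in>carrier A. mult A x y = mult A y x) \<and>
     (\<forall>x\<in>carrier A. mult A x (one A) = x) \<and>
     (\<forall>x\<in>carrier A. \<forall>y\<in>carrier A. \<forall>z\<in>carrier A.
        leq A x y \<longrightarrow> leq A (mult A x z) (mult A y z)) \<and>
     \<comment> \<open>residuation\<close>
     (\<forall>x\<in>carrier A. \<forall>y\<in>carrier A. \<forall>z\<in>carrier A.
        leq A z (imp A x y) \<longleftrightarrow> leq A (mult A x z) y)"

definition BL_algebra :: "('a, 'b) bl_alg_scheme \<Rightarrow> bool" where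
  "BL_algebra A \<longleftrightarrow> residuated_lattice A \<and>
     (\<forall>x\<in>carrier A. \<forall>y\<in>carrier A.
        join A (imp A x y) (imp A y x) = one A \<and>
        mult A x (imp A x y) = meet A x y)"

definition is_chain_in :: "('a, 'b) bl_alg_scheme \<Rightarrow> 'a set \<Rightarrow> bool" where
  "is_chain_in A S \<longleftrightarrow> (\<forall>x\<in>S. \<forall>y\<in>S. leq A x y \<or> leq A y x)"

definition BL_chain :: "('a, 'b) bl_alg_scheme \<Rightarrow> bool" where
  "BL_chain A \<longleftrightarrow> BL_algebra A \<and> is_chain_in A (carrier A)"

definition idems :: "('a, 'b) bl_alg_scheme \<Rightarrow> 'a set" where
  "idems A = {x\<in>carrier A. mult A x x = x}"

definition comps :: "('a, 'b) bl_alg_scheme \<Rightarrow> 'a \<Rightarrow> 'a set" where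
  "comps A x = {y\<in>idems A. leq A x y \<or> leq A y x}"

definition Dset :: "('a, 'b) bl_alg_scheme \<Rightarrow> 'a set" where
  "Dset A = {x\<in>idems A. comps A x = idems A \<and> is_chain_in A {y\<in>idems A. leq A y x}}"

definition pivot :: "('a, 'b) bl_alg_scheme \<Rightarrow> 'a" where
  "pivot A = (THE x. x \<in> Dset A \<and> (\<forall>y\<in>Dset A. leq A y x))"

definition BL_comet :: "('a, 'b) bl_alg_scheme \<Rightarrow> bool" where
  "BL_comet A \<longleftrightarrow> BL_algebra A \<and> finite (carrier A) \<and> pivot A \<noteq> zero A"

end

theory Submission
  imports Defs
begin

text \<open>
  In a finite residuated lattice the powers of an element x decrease and hence become stationary
  at an idempotent \<open>e \<sqsubseteq> x\<close>; moreover \<open>a \<squnion> b = \<one>\<close> implies \<open>a\<^sup>m \<squnion> b\<^sup>n = \<one>\<close>.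
  So if idempotent powers of \<open>x \<rightarrow> y\<close> and \<open>y \<rightarrow> x\<close> are comparable, one of them is \<open>\<one>\<close>, and
  by prelinearity a finite BL-algebra is a chain iff its idempotents form a chain, i.e. iff
  \<open>\<one> \<in> D(L)\<close>, i.e. iff the pivot p is \<open>\<one>\<close>.

  Conversely, if \<open>p\<^sup>*\<^sup>* = p \<noteq> \<zero>\<close>, compare idempotents \<open>e \<sqsubseteq> p\<^sup>* \<rightarrow> p\<close> and \<open>f \<sqsubseteq> p \<rightarrow> p\<^sup>*\<close>.
  Since p is idempotent, \<open>p \<sqsubseteq> f\<close> would give \<open>p \<sqsubseteq> p\<^sup>*\<close> and \<open>p = \<zero>\<close>; so \<open>f \<sqsubseteq> p\<close>,
  and as every idempotent is comparable with p and those below p form a chain, e and f are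
  comparable. Hence \<open>p\<^sup>* \<sqsubseteq> p\<close>, so \<open>p\<^sup>* = p \<odot> p\<^sup>* = \<zero>\<close> and \<open>p = p\<^sup>*\<^sup>* = \<one>\<close>.
\<close>

primrec mult_pow :: "('a, 'b) bl_alg_scheme \<Rightarrow> 'a \<Rightarrow> nat \<Rightarrow> 'a" where
  "mult_pow A x 0 = one A"
| "mult_pow A x (Suc n) = mult A x (mult_pow A x n)"

locale resid_lattice =
  fixes L :: "('a, 'b) bl_alg_scheme"
  assumes residuated: "residuated_lattice L"
begin

abbreviation le_L (infix "\<sqsubseteq>" 50) where "x \<sqsubseteq> y \<equiv> leq L x y"
abbreviation meet_L (infixl "\<sqinter>" 70) where "x \<sqinter> y \<equiv> meet L x y"
abbreviation join_L (infixl "\<squnion>" 65) where "x \<squnion> y \<equiv> join L x y"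
abbreviation mult_L (infixl "\<odot>" 70) where "x \<odot> y \<equiv> mult L x y"
abbreviation imp_L (infixr "\<rightarrow>" 60) where "x \<rightarrow> y \<equiv> imp L x y"
abbreviation zero_L ("\<zero>") where "\<zero> \<equiv> zero L"
abbreviation one_L ("\<one>") where "\<one> \<equiv> one L"
abbreviation pow_L (infixr "^\<^sub>\<odot>" 75) where "x ^\<^sub>\<odot> n \<equiv> mult_pow L x n"

lemma carrier_closed [simp]:
  "\<zero> \<in> carrier L" "\<one> \<in> carrier L"
  "x \<in> carrier L \<Longrightarrow> y \<in> carrier L \<Longrightarrow> x \<sqinter> y \<in> carrier L"
  "x \<in> carrier L \<Longrightarrow> y \<in> carrier L \<Longrightarrow> x \<squnion> y \<in> carrier L"
  "x \<in> carrier L \<Longrightarrow> y \<in> carrier L \<Longrightarrow> x \<odot> y \<in> carrier L"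
  "x \<in> carrier L \<Longrightarrow> y \<in> carrier L \<Longrightarrow> x \<rightarrow> y \<in> carrier L"
  using residuated unfolding residuated_lattice_def by blast+

lemma
  assumes "x \<in> carrier L" "y \<in> carrier L" "z \<in> carrier L"
  shows meet_assoc: "x \<sqinter> (y \<sqinter> z) = x \<sqinter> y \<sqinter> z"
    and join_assoc: "x \<squnion> (y \<squnion> z) = x \<squnion> y \<squnion> z"
    and mult_assoc: "x \<odot> (y \<odot> z) = x \<odot> y \<odot> z"
    and residuation: "z \<sqsubseteq> x \<rightarrow> y \<longleftrightarrow> x \<odot> z \<sqsubseteq> y"
  using residuated assms unfolding residuated_lattice_def by blast+

lemma
  assumes "x \<in> carrier L" "y \<in> carrier L"
  shows meet_comm: "x \<sqinter> y = y \<sqinter> x"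
    and join_comm: "x \<squnion> y = y \<squnion> x"
    and meet_join_absorb: "x \<sqinter> (x \<squnion> y) = x"
    and join_meet_absorb: "x \<squnion> (x \<sqinter> y) = x"
    and mult_comm: "x \<odot> y = y \<odot> x"
  using residuated assms unfolding residuated_lattice_def by blast+

lemma
  assumes "x \<in> carrier L"
  shows zero_le: "\<zero> \<sqsubseteq> x"
    and le_one: "x \<sqsubseteq> \<one>"
    and mult_one: "x \<odot> \<one> = x"
  using residuated assms unfolding residuated_lattice_def by blast+

lemma mult_mono_left:
  assumes "x \<in> carrier L" "y \<in> carrier L" "z \<in> carrier L" "x \<sqsubseteq> y"
  shows "x \<odot> z \<sqsubseteq> y \<odot> z"
  using residuated assms unfolding residuated_lattice_def by blast

lemma meet_idem: "x \<in> carrier L \<Longrightarrow> x \<sqinter> x = x"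
  by (metis carrier_closed(4) join_meet_absorb meet_join_absorb)

lemma le_refl: "x \<in> carrier L \<Longrightarrow> x \<sqsubseteq> x"
  by (simp add: leq_def meet_idem)

lemma le_antisym:
  "x \<in> carrier L \<Longrightarrow> y \<in> carrier L \<Longrightarrow> x \<sqsubseteq> y \<Longrightarrow> y \<sqsubseteq> x \<Longrightarrow> x = y"
  unfolding leq_def by (metis meet_comm)

lemma le_trans:
  "x \<in> carrier L \<Longrightarrow> y \<in> carrier L \<Longrightarrow> z \<in> carrier L \<Longrightarrow> x \<sqsubseteq> y \<Longrightarrow> y \<sqsubseteq> z \<Longrightarrow> x \<sqsubseteq> z"
  unfolding leq_def by (metis meet_assoc)

lemma meet_lower1: "x \<in> carrier L \<Longrightarrow> y \<in> carrier L \<Longrightarrow> x \<sqinter> y \<sqsubseteq> x"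
  unfolding leq_def by (metis meet_assoc meet_comm meet_idem)

lemma meet_lower2: "x \<in> carrier L \<Longrightarrow> y \<in> carrier L \<Longrightarrow> x \<sqinter> y \<sqsubseteq> y"
  by (metis meet_comm meet_lower1)

lemma meet_greatest:
  "x \<in> carrier L \<Longrightarrow> y \<in> carrier L \<Longrightarrow> z \<in> carrier L \<Longrightarrow> z \<sqsubseteq> x \<Longrightarrow> z \<sqsubseteq> y \<Longrightarrow> z \<sqsubseteq> x \<sqinter> y"
  unfolding leq_def by (metis meet_assoc)

lemma join_upper1: "x \<in> carrier L \<Longrightarrow> y \<in> carrier L \<Longrightarrow> x \<sqsubseteq> x \<squnion> y"
  unfolding leq_def by (rule meet_join_absorb)

lemma join_upper2: "x \<in> carrier L \<Longrightarrow> y \<in> carrier L \<Longrightarrow> y \<sqsubseteq> x \<squnion> y"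
  by (metis join_comm join_upper1)

lemma le_imp_join_eq: "x \<in> carrier L \<Longrightarrow> y \<in> carrier L \<Longrightarrow> x \<sqsubseteq> y \<Longrightarrow> x \<squnion> y = y"
  unfolding leq_def by (metis join_comm join_meet_absorb meet_comm)

lemma join_least:
  assumes "x \<in> carrier L" "y \<in> carrier L" "z \<in> carrier L" "x \<sqsubseteq> z" "y \<sqsubseteq> z"
  shows "x \<squnion> y \<sqsubseteq> z"
proof -
  have "x \<squnion> y \<squnion> z = z"
    using assms by (metis join_assoc le_imp_join_eq)
  then show ?thesis
    using assms by (metis carrier_closed(4) join_upper1 le_antisym le_imp_join_eq leq_def
        meet_join_absorb)
qed

lemma one_le_imp_eq: "x \<in> carrier L \<Longrightarrow> \<one> \<sqsubseteq> x \<Longrightarrow> x = \<one>"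
  by (simp add: le_antisym le_one)

lemma le_zero_imp_eq: "x \<in> carrier L \<Longrightarrow> x \<sqsubseteq> \<zero> \<Longrightarrow> x = \<zero>"
  by (simp add: le_antisym zero_le)

lemma mult_one_left: "x \<in> carrier L \<Longrightarrow> \<one> \<odot> x = x"
  by (metis carrier_closed(2) mult_comm mult_one)

lemma mult_mono_right:
  "x \<in> carrier L \<Longrightarrow> y \<in> carrier L \<Longrightarrow> z \<in> carrier L \<Longrightarrow> y \<sqsubseteq> z \<Longrightarrow> x \<odot> y \<sqsubseteq> x \<odot> z"
  by (metis mult_comm mult_mono_left)

lemma mult_le_left: "x \<in> carrier L \<Longrightarrow> y \<in> carrier L \<Longrightarrow> x \<odot> y \<sqsubseteq> x"
  by (metis carrier_closed(2) le_one mult_mono_right mult_one)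

lemma mult_le_right: "x \<in> carrier L \<Longrightarrow> y \<in> carrier L \<Longrightarrow> x \<odot> y \<sqsubseteq> y"
  by (metis mult_comm mult_le_left)

lemma one_le_imp_iff: "x \<in> carrier L \<Longrightarrow> y \<in> carrier L \<Longrightarrow> \<one> \<sqsubseteq> x \<rightarrow> y \<longleftrightarrow> x \<sqsubseteq> y"
  by (simp add: residuation mult_one)

lemma neg_zero: "neg L \<zero> = \<one>"
  unfolding neg_def by (simp add: one_le_imp_eq one_le_imp_iff le_refl)

lemma neg_one: "neg L \<one> = \<zero>"
  unfolding neg_def by (metis carrier_closed le_refl le_zero_imp_eq mult_one_left residuation)

lemma mult_join_distrib:
  assumes "x \<in> carrier L" "y \<in> carrier L" "z \<in> carrier L"
  shows "x \<odot> (y \<squnion> z) = x \<odot> y \<squnion> x \<odot> z"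
proof (rule le_antisym)
  let ?r = "x \<odot> y \<squnion> x \<odot> z"
  have "y \<sqsubseteq> x \<rightarrow> ?r" "z \<sqsubseteq> x \<rightarrow> ?r"
    using assms by (simp_all add: residuation join_upper1 join_upper2)
  then have "y \<squnion> z \<sqsubseteq> x \<rightarrow> ?r"
    using assms by (simp add: join_least)
  then show "x \<odot> (y \<squnion> z) \<sqsubseteq> ?r"
    using assms by (simp add: residuation)
  show "?r \<sqsubseteq> x \<odot> (y \<squnion> z)"
    using assms by (simp add: join_least mult_mono_right join_upper1 join_upper2)
qed (use assms in simp_all)

lemma join_mult_eq_one:
  assumes "a \<in> carrier L" "b \<in> carrier L" "c \<in> carrier L"
    and "a \<squnion> b = \<one>" "a \<squnion> c = \<one>"
  shows "a \<squnion> b \<odot> c = \<one>"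
proof -
  have "b \<odot> a \<sqsubseteq> a \<squnion> b \<odot> c"
    using assms le_trans[OF _ _ _ mult_le_right join_upper1] by simp
  moreover have "b \<odot> c \<sqsubseteq> a \<squnion> b \<odot> c"
    using assms by (simp add: join_upper2)
  moreover have "b = b \<odot> a \<squnion> b \<odot> c"
    using assms by (metis mult_join_distrib mult_one)
  ultimately have "b \<sqsubseteq> a \<squnion> b \<odot> c"
    using assms join_least by (metis carrier_closed(4,5))
  then have "a \<squnion> b \<sqsubseteq> a \<squnion> b \<odot> c"
    using assms(1-3) by (simp add: join_least join_upper1)
  then show ?thesis
    using assms by (simp add: one_le_imp_eq)
qed

lemma mult_pow_closed [simp]: "x \<in> carrier L \<Longrightarrow> x ^\<^sub>\<odot> n \<in> carrier L"
  by (induction n) simp_all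

lemma mult_pow_add: "x \<in> carrier L \<Longrightarrow> x ^\<^sub>\<odot> (m + n) = x ^\<^sub>\<odot> m \<odot> x ^\<^sub>\<odot> n"
  by (induction m) (simp_all add: mult_one_left mult_assoc)

lemma mult_pow_le: "x \<in> carrier L \<Longrightarrow> 1 \<le> n \<Longrightarrow> x ^\<^sub>\<odot> n \<sqsubseteq> x"
  by (cases n) (simp_all add: mult_le_left)

lemma mult_pow_antimono: "x \<in> carrier L \<Longrightarrow> m \<le> n \<Longrightarrow> x ^\<^sub>\<odot> n \<sqsubseteq> x ^\<^sub>\<odot> m"
  by (metis le_add_diff_inverse mult_le_left mult_pow_add mult_pow_closed)

lemma mult_pow_stable:
  assumes "x \<in> carrier L" "x ^\<^sub>\<odot> Suc i = x ^\<^sub>\<odot> i"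
  shows "x ^\<^sub>\<odot> (i + k) = x ^\<^sub>\<odot> i"
  using assms by (induction k) simp_all

lemma ex_idempotent_mult_pow:
  assumes fin: "finite (carrier L)" and x: "x \<in> carrier L"
  obtains n where "1 \<le> n" "x ^\<^sub>\<odot> n \<in> idems L"
proof -
  have "finite (mult_pow L x ` {1..})"
    using x by (auto intro: finite_subset[OF _ fin])
  then obtain i where i: "1 \<le> i" "infinite {j \<in> {1..}. x ^\<^sub>\<odot> j = x ^\<^sub>\<odot> i}"
    using pigeonhole_infinite[OF infinite_Ici] by auto
  then obtain j where j: "i < j" "x ^\<^sub>\<odot> j = x ^\<^sub>\<odot> i"
    unfolding finite_nat_set_iff_bounded_le by (auto simp: not_le)
  have "x ^\<^sub>\<odot> Suc i = x ^\<^sub>\<odot> i"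
    using x j mult_pow_antimono[of x "Suc i" j] mult_pow_antimono[of x i "Suc i"]
    by (simp add: le_antisym)
  then have "x ^\<^sub>\<odot> i \<odot> x ^\<^sub>\<odot> i = x ^\<^sub>\<odot> i"
    using x by (metis mult_pow_add mult_pow_stable)
  with i x show ?thesis
    by (intro that) (auto simp: idems_def)
qed

lemma join_mult_pow_eq_one:
  assumes "a \<in> carrier L" "b \<in> carrier L" "a \<squnion> b = \<one>"
  shows "a \<squnion> b ^\<^sub>\<odot> n = \<one>"
  using assms by (induction n) (simp_all add: join_mult_eq_one le_imp_join_eq le_one)

lemma idempotent_lower_bounds_join_one:
  assumes fin: "finite (carrier L)"
    and "a \<in> carrier L" "b \<in> carrier L" "a \<squnion> b = \<one>"
  obtains e f where "e \<in> idems L" "f \<in> idems L" "e \<sqsubseteq> a" "f \<sqsubseteq> b" "e \<squnion> f = \<one>"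
proof -
  obtain m n where "1 \<le> m" "a ^\<^sub>\<odot> m \<in> idems L" "1 \<le> n" "b ^\<^sub>\<odot> n \<in> idems L"
    using ex_idempotent_mult_pow assms by metis
  moreover have "a ^\<^sub>\<odot> m \<squnion> b ^\<^sub>\<odot> n = \<one>"
    using assms join_mult_pow_eq_one join_comm by (metis mult_pow_closed)
  ultimately show ?thesis
    using that assms by (simp add: mult_pow_le)
qed

lemma finite_chain_has_greatest:
  assumes "finite S" "S \<noteq> {}" "S \<subseteq> carrier L" "is_chain_in L S"
  shows "\<exists>m\<in>S. \<forall>y\<in>S. y \<sqsubseteq> m"
  using assms
proof (induction S rule: finite_ne_induct)
  case (singleton x)
  then show ?case by (simp add: le_refl)
next
  case (insert x F)
  then obtain m where m: "m \<in> F" "\<forall>y\<in>F. y \<sqsubseteq> m"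
    by (auto simp: is_chain_in_def)
  with insert.prems have "m \<sqsubseteq> x \<or> x \<sqsubseteq> m"
    by (simp add: is_chain_in_def)
  then show ?case
  proof
    assume "m \<sqsubseteq> x"
    with m insert.prems have "\<forall>y\<in>insert x F. y \<sqsubseteq> x"
      by (auto intro: le_refl le_trans[of _ m x])
    then show ?thesis by blast
  next
    assume "x \<sqsubseteq> m"
    with m show ?thesis by blast
  qed
qed

lemma zero_in_Dset: "\<zero> \<in> Dset L"
proof -
  have "\<zero> \<odot> \<zero> = \<zero>"
    by (simp add: le_zero_imp_eq mult_le_left)
  then show ?thesis
    by (auto simp: Dset_def comps_def idems_def is_chain_in_def zero_le dest: le_zero_imp_eq)
qed

lemma
  assumes "finite (carrier L)"
  shows pivot_in_Dset: "pivot L \<in> Dset L"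
    and le_pivot: "y \<in> Dset L \<Longrightarrow> y \<sqsubseteq> pivot L"
proof -
  have D: "Dset L \<subseteq> carrier L" "is_chain_in L (Dset L)"
    by (auto simp: Dset_def idems_def comps_def is_chain_in_def)
  then obtain m where m: "m \<in> Dset L" "\<forall>y\<in>Dset L. y \<sqsubseteq> m"
    using finite_chain_has_greatest finite_subset[OF _ assms] zero_in_Dset by blast
  have "pivot L = m"
    unfolding pivot_def by (rule the_equality) (use m D in \<open>auto intro: le_antisym\<close>)
  with m show "pivot L \<in> Dset L" "y \<in> Dset L \<Longrightarrow> y \<sqsubseteq> pivot L"
    by auto
qed

lemma one_in_Dset_iff: "\<one> \<in> Dset L \<longleftrightarrow> is_chain_in L (idems L)"
proof -
  have "{y \<in> idems L. y \<sqsubseteq> \<one>} = idems L" "comps L \<one> = idems L"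
    by (auto simp: comps_def idems_def le_one)
  then show ?thesis
    by (simp add: Dset_def idems_def mult_one)
qed

lemma pivot_eq_one_iff:
  assumes "finite (carrier L)"
  shows "pivot L = \<one> \<longleftrightarrow> is_chain_in L (idems L)"
proof
  assume "pivot L = \<one>"
  then show "is_chain_in L (idems L)"
    using pivot_in_Dset[OF assms] by (simp add: one_in_Dset_iff)
next
  assume "is_chain_in L (idems L)"
  then have "\<one> \<sqsubseteq> pivot L"
    using le_pivot[OF assms] by (simp add: one_in_Dset_iff)
  moreover have "pivot L \<in> carrier L"
    using pivot_in_Dset[OF assms] by (simp add: Dset_def idems_def)
  ultimately show "pivot L = \<one>"
    by (simp add: one_le_imp_eq)
qed

lemma idempotent_le_neg_imp_zero:
  assumes "e \<in> idems L" "e \<sqsubseteq> neg L e"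
  shows "e = \<zero>"
  using assms by (auto simp: idems_def neg_def residuation le_zero_imp_eq)

end

locale bl_algebra = resid_lattice +
  assumes prelinear: "\<lbrakk>x \<in> carrier L; y \<in> carrier L\<rbrakk> \<Longrightarrow> (x \<rightarrow> y) \<squnion> (y \<rightarrow> x) = \<one>"
    and divisible: "\<lbrakk>x \<in> carrier L; y \<in> carrier L\<rbrakk> \<Longrightarrow> x \<odot> (x \<rightarrow> y) = x \<sqinter> y"

lemma bl_algebraI: "BL_algebra L \<Longrightarrow> bl_algebra L"
  unfolding BL_algebra_def bl_algebra_def bl_algebra_axioms_def resid_lattice_def by blast

context bl_algebra
begin

lemma idempotent_mult_eq_meet:
  assumes "e \<in> idems L" "x \<in> carrier L"
  shows "e \<odot> x = e \<sqinter> x"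
proof -
  have e: "e \<in> carrier L" "e \<odot> e = e"
    using assms by (auto simp: idems_def)
  then have "e \<sqinter> x = e \<odot> (e \<sqinter> x)"
    using assms by (metis carrier_closed(6) divisible mult_assoc)
  also have "\<dots> \<sqsubseteq> e \<odot> x"
    using assms e by (simp add: meet_lower2 mult_mono_right)
  finally show ?thesis
    using assms e by (simp add: le_antisym meet_greatest mult_le_left mult_le_right)
qed

lemma prelinear_idempotents:
  assumes fin: "finite (carrier L)" and x: "x \<in> carrier L" and y: "y \<in> carrier L"
  obtains e f where "e \<in> idems L" "f \<in> idems L" "e \<sqsubseteq> x \<rightarrow> y" "f \<sqsubseteq> y \<rightarrow> x"
    and "e \<sqsubseteq> f \<or> f \<sqsubseteq> e \<Longrightarrow> x \<sqsubseteq> y \<or> y \<sqsubseteq> x"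
proof -
  obtain e f where ef: "e \<in> idems L" "f \<in> idems L" "e \<sqsubseteq> x \<rightarrow> y" "f \<sqsubseteq> y \<rightarrow> x"
    and join: "e \<squnion> f = \<one>"
    using idempotent_lower_bounds_join_one[OF fin _ _ prelinear[OF x y]] x y by auto
  have "x \<sqsubseteq> y \<or> y \<sqsubseteq> x" if "e \<sqsubseteq> f \<or> f \<sqsubseteq> e"
  proof -
    have "e \<in> carrier L" "f \<in> carrier L"
      using ef by (simp_all add: idems_def)
    with that join have "e = \<one> \<or> f = \<one>"
      by (metis join_comm le_imp_join_eq)
    with ef have "\<one> \<sqsubseteq> x \<rightarrow> y \<or> \<one> \<sqsubseteq> y \<rightarrow> x"
      by auto
    with x y show ?thesis
      by (simp add: one_le_imp_iff)
  qed
  with ef that show ?thesis by blast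
qed

lemma chain_iff_idems_chain:
  assumes fin: "finite (carrier L)"
  shows "is_chain_in L (carrier L) \<longleftrightarrow> is_chain_in L (idems L)"
proof
  assume "is_chain_in L (carrier L)"
  then show "is_chain_in L (idems L)"
    by (auto simp: is_chain_in_def idems_def)
next
  assume idems_chain: "is_chain_in L (idems L)"
  show "is_chain_in L (carrier L)"
    unfolding is_chain_in_def
  proof (intro ballI)
    fix x y
    assume "x \<in> carrier L" "y \<in> carrier L"
    then obtain e f where "e \<in> idems L" "f \<in> idems L"
      and "e \<sqsubseteq> f \<or> f \<sqsubseteq> e \<Longrightarrow> x \<sqsubseteq> y \<or> y \<sqsubseteq> x"
      using prelinear_idempotents[OF fin] by metis
    with idems_chain show "x \<sqsubseteq> y \<or> y \<sqsubseteq> x"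
      unfolding is_chain_in_def by blast
  qed
qed

lemma pivot_eq_one_if_double_neg:
  assumes fin: "finite (carrier L)" and p0: "pivot L \<noteq> \<zero>"
    and nn: "neg L (neg L (pivot L)) = pivot L"
  shows "pivot L = \<one>"
proof -
  define p where "p = pivot L"
  define q where "q = neg L p"
  have p: "p \<in> idems L" "comps L p = idems L" "is_chain_in L {y \<in> idems L. y \<sqsubseteq> p}"
    using pivot_in_Dset[OF fin] by (auto simp: Dset_def p_def)
  then have pC: "p \<in> carrier L" "p \<odot> p = p"
    by (auto simp: idems_def)
  then have qC: "q \<in> carrier L"
    by (simp add: q_def neg_def)
  have p_not_le_q: "\<not> p \<sqsubseteq> q"
    using idempotent_le_neg_imp_zero p p0 by (auto simp: q_def p_def)
  obtain e f where ef: "e \<in> idems L" "f \<in> idems L" "f \<sqsubseteq> p \<rightarrow> q"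
    and total: "e \<sqsubseteq> f \<or> f \<sqsubseteq> e \<Longrightarrow> q \<sqsubseteq> p \<or> p \<sqsubseteq> q"
    using prelinear_idempotents[OF fin qC pC(1)] by metis
  then have eC: "e \<in> carrier L" and fC: "f \<in> carrier L"
    by (simp_all add: idems_def)
  have "\<not> p \<sqsubseteq> f"
  proof
    assume "p \<sqsubseteq> f"
    with ef(3) pC qC fC have "p \<sqsubseteq> p \<rightarrow> q"
      using le_trans[of p f "p \<rightarrow> q"] by simp
    with pC qC have "p \<sqsubseteq> q"
      by (simp add: residuation)
    with p_not_le_q show False ..
  qed
  with p ef have f_le_p: "f \<sqsubseteq> p"
    by (auto simp: comps_def)
  have "e \<sqsubseteq> f \<or> f \<sqsubseteq> e"
  proof (cases "p \<sqsubseteq> e")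
    case True
    with f_le_p pC eC fC show ?thesis
      using le_trans[of f p e] by simp
  next
    case False
    with p ef have "e \<sqsubseteq> p"
      by (auto simp: comps_def)
    with p ef f_le_p show ?thesis
      by (auto simp: is_chain_in_def)
  qed
  with total p_not_le_q have "q \<sqsubseteq> p"
    by blast
  then have "q = p \<sqinter> q"
    using pC qC by (simp add: leq_def meet_comm)
  also have "\<dots> = p \<odot> q"
    using p qC by (simp add: idempotent_mult_eq_meet)
  also have "\<dots> = \<zero>"
    using pC le_refl[OF qC] by (simp add: q_def neg_def residuation le_zero_imp_eq)
  finally have "q = \<zero>" .
  with nn show ?thesis
    by (simp add: p_def q_def neg_zero)
qed

end

theorem proposition1p11:
  fixes L :: "('a, 'b) bl_alg_scheme"
  assumes "BL_comet L"
  shows "BL_chain L \<longleftrightarrow> neg L (neg L (pivot L)) = pivot L"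
proof -
  have bl: "BL_algebra L" and fin: "finite (carrier L)" and p0: "pivot L \<noteq> zero L"
    using assms unfolding BL_comet_def by auto
  interpret bl_algebra L
    using bl by (rule bl_algebraI)
  have "BL_chain L \<longleftrightarrow> is_chain_in L (idems L)"
    using bl chain_iff_idems_chain[OF fin] by (simp add: BL_chain_def)
  also have "\<dots> \<longleftrightarrow> pivot L = one L"
    using fin by (rule pivot_eq_one_iff[symmetric])
  also have "\<dots> \<longleftrightarrow> neg L (neg L (pivot L)) = pivot L"
    using fin p0 pivot_eq_one_if_double_neg neg_zero neg_one by metis
  finally show ?thesis .
qed

end
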